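(* Let $f:\mathbb{R}\to\mathbb{R}$ be a Lipschitz continuous, 1-periodic function which is exactly 1-periodic, in the sense that $f(\cdot-\theta)\neq f(\cdot-\theta^* )$ on a set of positive Lebesgue measure whenever $\theta\neq\theta^* \bmod 1$. Let $Z_1,\dots,Z_n$ be iid with an even density $\phi$ and distribution function $\Phi$, fix $\theta^*\in\mathbb{R}$, and observe $Y_i=f(x_i-\theta^* )+Z_i$, $i=1,\dots,n$, with $x_i:=i/n$. Let $R_i$ denote the rank of $Y_i$ among $Y_1,\dots,Y_n$ (in increasing order) and set $$\widehat M_n(\theta):=\frac1n\sum_{i=1}^n \frac{R_i}{n}\, f(x_i-\theta).$$ Define $\Phi_2(t):=\int_{-\infty}^\infty \Phi(t+z)\phi(z)\,dz$ and $$M(\theta):=\int_0^1\!\!\int_0^1 \Phi_2\big(f(x_0)-f(x)\big)\, f(x_0+\theta^*-\theta)\,dx\,dx_0 .$$ Then $\sup_{\theta\in\mathbb{R}}|\widehat M_n(\theta)-M(\theta)|\to 0$ in probability as $n\to\infty$.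
   Context: Template matching model: $f$ is the known template, $\theta^*$ the unknown shift, $Z_i$ the noise. *)

theory Defs
  imports "HOL-Probability.Probability"
begin

definition rank :: "(nat \<Rightarrow> real) \<Rightarrow> nat \<Rightarrow> nat \<Rightarrow> nat" where
  "rank Y n i = card {j \<in> {1..n}. Y j \<le> Y i}"

definition Mhat :: "(real \<Rightarrow> real) \<Rightarrow> (nat \<Rightarrow> real) \<Rightarrow> nat \<Rightarrow> real \<Rightarrow> real" where
  "Mhat f Y n \<theta> = (1 / real n) * (\<Sum>i = 1..n. (real (rank Y n i) / real n) * f (real i / real n - \<theta>))"

definition Phi2 :: "(real \<Rightarrow> real) \<Rightarrow> (real \<Rightarrow> real) \<Rightarrow> real \<Rightarrow> real" where
  "Phi2 \<Phi> \<phi> t = (LINT z|lborel. \<Phi> (t + z) * \<phi> z)"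

definition Mpop :: "(real \<Rightarrow> real) \<Rightarrow> (real \<Rightarrow> real) \<Rightarrow> (real \<Rightarrow> real) \<Rightarrow> real \<Rightarrow> real \<Rightarrow> real" where
  "Mpop f \<Phi> \<phi> \<theta>s \<theta> =
     (LBINT x0=0..1. (LBINT x=0..1. Phi2 \<Phi> \<phi> (f x0 - f x) * f (x0 + \<theta>s - \<theta>)))"

end

theory Submission
  imports Defs
begin

text \<open>Writing the rank as \<open>R_i = \<Sum>_j 1{Y_j \<le> Y_i}\<close>, the criterion becomes the double average
  \<open>n\<^sup>-\<^sup>2 \<Sum>_{i,j} f(x_i - \<theta>) 1{Y_j \<le> Y_i}\<close>. For \<open>i \<noteq> j\<close> the indicator has mean
  \<open>P(Z_j \<le> Z_i + c) = \<Phi>\<^sub>2(c)\<close> with \<open>c = f(x_i - \<theta>\<^sup>*) - f(x_j - \<theta>\<^sup>*)\<close>, so up to the diagonal the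
  expected criterion is a Riemann sum of the continuous, doubly periodic integrand of \<open>M(\<theta>)\<close> and
  converges to it. Centred indicators with disjoint index pairs are independent, so only \<open>O(n\<^sup>3)\<close>
  of the \<open>n\<^sup>4\<close> covariances survive: the variance is \<open>O(1/n)\<close>, and Chebyshev's inequality gives
  pointwise convergence in probability. Both criteria are \<open>1\<close>-periodic and Lipschitz in \<open>\<theta>\<close> with
  the constant of \<open>f\<close>, so the supremum over \<open>\<theta>\<close> is controlled by a finite grid of shifts.\<close>

section \<open>Riemann sums of periodic functions\<close>

lemma integral_periodic_shift:
  fixes F :: "real \<Rightarrow> real"
  assumes cont: "continuous_on UNIV F" and per: "\<And>x. F (x + 1) = F x"
  shows "integral {s..s+1} F = integral {0..1} F"
proof -
  interpret periodic_fun_simple' F by standard (rule per)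
  have integrable: "F integrable_on {a..b}" for a b
    using cont by (blast intro: integrable_continuous_real continuous_on_subset)
  have shift: "integral {a - of_int k..b - of_int k} F = integral {a..b} F" for a b k
    using integral_shift_real_ivl[of a "of_int k" b F] by (simp add: plus_of_int)
  define r where "r = frac s"
  have r: "0 \<le> r" "r \<le> 1" by (simp_all add: r_def frac_lt_1 less_imp_le)
  have "integral {s..s+1} F = integral {r..r+1} F"
    using shift[where a=s and b="s + 1" and k="\<lfloor>s\<rfloor>"] by (simp add: r_def frac_def algebra_simps)
  also have "\<dots> = integral {r..1} F + integral {1..r+1} F"
    using r by (intro Henstock_Kurzweil_Integration.integral_combine[symmetric] integrable) auto
  also have "integral {1..r+1} F = integral {0..r} F"
    using shift[where a=1 and b="r + 1" and k=1] by simp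
  also have "integral {r..1} F + integral {0..r} F = integral {0..1} F"
    using r Henstock_Kurzweil_Integration.integral_combine[OF _ _ integrable, of 0 r 1] by simp
  finally show ?thesis .
qed

lemma integral_uniform_partition:
  fixes F :: "real \<Rightarrow> real"
  assumes cont: "continuous_on UNIV F" and n: "n > 0" and k: "k \<le> n"
  shows "integral {s..s + real k / real n} F =
    (\<Sum>i=1..k. integral {s + (real i - 1) / real n .. s + real i / real n} F)"
  using k
proof (induction k)
  case (Suc k)
  have "integral {s..s + real k / real n} F
      + integral {s + real k / real n .. s + real (Suc k) / real n} F
      = integral {s..s + real (Suc k) / real n} F"
  proof (rule Henstock_Kurzweil_Integration.integral_combine)
    show "s \<le> s + real k / real n" "s + real k / real n \<le> s + real (Suc k) / real n"
      using n by (simp_all add: divide_right_mono)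
  qed (auto intro!: integrable_continuous_real continuous_on_subset[OF cont])
  with Suc show ?case by simp
qed simp

lemma periodic_riemann_sum_error:
  fixes F :: "real \<Rightarrow> real"
  assumes cont: "continuous_on UNIV F" and per: "\<And>x. F (x + 1) = F x" and n: "n > 0"
    and modulus: "\<And>x y. \<bar>x - y\<bar> \<le> 1 / real n \<Longrightarrow> \<bar>F x - F y\<bar> \<le> e"
  shows "\<bar>(\<Sum>i=1..n. F (real i / real n + s)) / real n - integral {0..1} F\<bar> \<le> e"
proof -
  define cell where "cell i = {s + (real i - 1) / real n .. s + real i / real n}" for i
  have cell_error: "\<bar>F (real i / real n + s) / real n - integral (cell i) F\<bar> \<le> e / real n" for i
  proof -
    let ?a = "s + (real i - 1) / real n" and ?b = "s + real i / real n"
    have ab: "?a \<le> ?b" and len: "?b - ?a = 1 / real n"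
      using n by (simp_all add: divide_right_mono diff_divide_distrib)
    have "F (real i / real n + s) / real n - integral (cell i) F
        = integral (cell i) (\<lambda>x. F (real i / real n + s) - F x)"
      using ab len unfolding cell_def
      by (subst integral_diff) (auto intro!: integrable_continuous_real continuous_on_subset[OF cont])
    also have "norm \<dots> \<le> e * (?b - ?a)"
      unfolding cell_def
    proof (intro integral_bound ab continuous_intros continuous_on_subset[OF cont])
      fix t assume "t \<in> {?a..?b}"
      then have "\<bar>(real i / real n + s) - t\<bar> \<le> 1 / real n" using len by auto
      then show "norm (F (real i / real n + s) - F t) \<le> e" using modulus by simp
    qed auto
    finally show ?thesis using len by simp
  qed
  have "integral {0..1} F = (\<Sum>i=1..n. integral (cell i) F)"
    using integral_uniform_partition[OF cont n, of n s] integral_periodic_shift[OF cont per, of s] n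
    by (simp add: cell_def)
  then have "\<bar>(\<Sum>i=1..n. F (real i / real n + s)) / real n - integral {0..1} F\<bar>
      = \<bar>\<Sum>i=1..n. F (real i / real n + s) / real n - integral (cell i) F\<bar>"
    by (simp add: sum_divide_distrib sum_subtractf)
  also have "\<dots> \<le> (\<Sum>i=1..n. e / real n)"
    by (rule order.trans[OF sum_abs sum_mono]) (rule cell_error)
  also have "\<dots> = e" using n by simp
  finally show ?thesis .
qed

context
  fixes H :: "real \<Rightarrow> real \<Rightarrow> real"
  assumes H_cont: "continuous_on UNIV (\<lambda>(u, v). H u v)"
begin

lemma continuous_on_section: "continuous_on A (H u)"
  using continuous_on_compose2[OF H_cont continuous_on_Pair[OF continuous_on_const continuous_on_id]]
  by simp

lemma continuous_on_integral_section: "continuous_on A (\<lambda>u. integral {0..1} (H u))"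
  using integral_continuous_on_param[of A 0 1 H] continuous_on_subset[OF H_cont] by simp

lemma integral_section_diff_le:
  assumes "\<And>v. \<bar>H u v - H u' v\<bar> \<le> e"
  shows "\<bar>integral {0..1} (H u) - integral {0..1} (H u')\<bar> \<le> e"
proof -
  have "integral {0..1} (H u) - integral {0..1} (H u') = integral {0..1} (\<lambda>v. H u v - H u' v)"
    by (subst integral_diff) (auto intro!: integrable_continuous_real continuous_on_section)
  also have "norm \<dots> \<le> e * (1 - 0)"
    by (rule integral_bound) (use assms in \<open>auto intro!: continuous_intros continuous_on_section\<close>)
  finally show ?thesis by simp
qed

context
  assumes periodic_fst: "\<And>u v. H (u + 1) v = H u v" and periodic_snd: "\<And>u v. H u (v + 1) = H u v"
begin

text \<open>Uniform continuity follows from continuity on the compact square \<open>[-1, 2]\<^sup>2\<close>, into which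
  any two nearby points can be shifted together by the same integer translation.\<close>

lemma periodic2_uniform_modulus:
  assumes "e > 0"
  shows "\<exists>d>0. \<forall>u u' v v'. \<bar>u - u'\<bar> \<le> d \<longrightarrow> \<bar>v - v'\<bar> \<le> d \<longrightarrow> \<bar>H u v - H u' v'\<bar> \<le> e"
proof -
  let ?S = "{-1..2} \<times> {-1..2 :: real}"
  have "uniformly_continuous_on ?S (\<lambda>(u, v). H u v)"
    by (intro compact_uniformly_continuous continuous_on_subset[OF H_cont] compact_Times) auto
  then obtain d0 where d0: "d0 > 0"
    and close: "\<And>p p'. p \<in> ?S \<Longrightarrow> p' \<in> ?S \<Longrightarrow> dist p' p < d0 \<Longrightarrow>
      dist ((\<lambda>(u, v). H u v) p') ((\<lambda>(u, v). H u v) p) < e"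
    using \<open>e > 0\<close> unfolding uniformly_continuous_on_def by metis
  have shift: "H (u - of_int a) (v - of_int b) = H u v" for u v a b
  proof -
    interpret U: periodic_fun_simple' "\<lambda>u. H u v" by standard (rule periodic_fst)
    interpret V: periodic_fun_simple' "\<lambda>v. H (u - of_int a) v" by standard (rule periodic_snd)
    show ?thesis using U.minus_of_int V.minus_of_int by simp
  qed
  define d where "d = min 1 (d0 / 3)"
  have "\<bar>H u v - H u' v'\<bar> \<le> e" if u: "\<bar>u - u'\<bar> \<le> d" and v: "\<bar>v - v'\<bar> \<le> d" for u u' v v'
  proof -
    define a b where "a = \<lfloor>u\<rfloor>" and "b = \<lfloor>v\<rfloor>"
    have ab: "of_int a \<le> u" "u < of_int a + 1" "of_int b \<le> v" "v < of_int b + 1"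
      unfolding a_def b_def by linarith+
    define p p' where "p = (u - of_int a, v - of_int b)" and "p' = (u' - of_int a, v' - of_int b)"
    have "p \<in> ?S" "p' \<in> ?S"
      using ab u v unfolding p_def p'_def d_def by (auto simp: abs_le_iff)
    moreover have "dist p' p < d0"
    proof -
      have "dist p' p \<le> \<bar>u' - u\<bar> + \<bar>v' - v\<bar>"
        unfolding p_def p'_def dist_Pair_Pair dist_real_def
        using sqrt_sum_squares_le_sum_abs by simp
      also have "\<dots> < d0" using u v d0 unfolding d_def by linarith
      finally show ?thesis .
    qed
    ultimately have "dist (H (u' - of_int a) (v' - of_int b)) (H (u - of_int a) (v - of_int b)) < e"
      using close by (fastforce simp: p_def p'_def)
    then show ?thesis by (simp add: shift dist_real_def abs_minus_commute)
  qed
  moreover have "d > 0" using d0 by (simp add: d_def)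
  ultimately show ?thesis by blast
qed

lemma double_riemann_sum_error:
  assumes n: "n > 0"
    and modulus: "\<And>u u' v v'. \<bar>u - u'\<bar> \<le> 1 / real n \<Longrightarrow> \<bar>v - v'\<bar> \<le> 1 / real n \<Longrightarrow>
      \<bar>H u v - H u' v'\<bar> \<le> e"
  shows "\<bar>(\<Sum>i=1..n. \<Sum>j=1..n. H (real i / real n + s) (real j / real n + s)) / (real n)\<^sup>2
          - integral {0..1} (\<lambda>u. integral {0..1} (H u))\<bar> \<le> 2 * e"
proof -
  define G where "G u = integral {0..1} (H u)" for u
  define x where "x i = real i / real n + s" for i
  have inner: "\<bar>(\<Sum>j=1..n. H u (x j)) / real n - G u\<bar> \<le> e" for u
    unfolding G_def x_def
    by (rule periodic_riemann_sum_error[OF continuous_on_section periodic_snd n]) (simp add: modulus)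
  have G_per: "G (u + 1) = G u" for u
    using ext[of "H (u + 1)" "H u", OF periodic_fst] by (simp add: G_def)
  have outer: "\<bar>(\<Sum>i=1..n. G (x i)) / real n - integral {0..1} G\<bar> \<le> e"
    unfolding x_def
    using continuous_on_integral_section[folded G_def]
    by (rule periodic_riemann_sum_error[where F=G, OF _ G_per n])
      (simp add: G_def integral_section_diff_le modulus)
  have "\<bar>\<Sum>i=1..n. (\<Sum>j=1..n. H (x i) (x j)) / real n - G (x i)\<bar> \<le> real n * e"
    using order.trans[OF sum_abs sum_mono[of "{1..n}", OF inner[of "x i" for i]]] by simp
  then have "\<bar>(\<Sum>i=1..n. (\<Sum>j=1..n. H (x i) (x j)) / real n - G (x i)) / real n\<bar> \<le> e"
    using n by (simp add: field_simps)
  moreover have "(\<Sum>i=1..n. \<Sum>j=1..n. H (x i) (x j)) / (real n)\<^sup>2 - integral {0..1} G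
      = (\<Sum>i=1..n. (\<Sum>j=1..n. H (x i) (x j)) / real n - G (x i)) / real n
        + ((\<Sum>i=1..n. G (x i)) / real n - integral {0..1} G)"
    by (simp add: sum_subtractf sum_divide_distrib power2_eq_square diff_divide_distrib)
  ultimately show ?thesis
    using outer unfolding G_def x_def by linarith
qed

lemma double_riemann_sum_tendsto:
  "(\<lambda>n. (\<Sum>i=1..n. \<Sum>j=1..n. H (real i / real n + s) (real j / real n + s)) / (real n)\<^sup>2)
     \<longlonglongrightarrow> integral {0..1} (\<lambda>u. integral {0..1} (H u))" (is "?R \<longlonglongrightarrow> ?I")
proof (rule LIMSEQ_I)
  fix r :: real assume r: "r > 0"
  obtain d where d: "d > 0"
    and modulus: "\<forall>u u' v v'. \<bar>u - u'\<bar> \<le> d \<longrightarrow> \<bar>v - v'\<bar> \<le> d \<longrightarrow> \<bar>H u v - H u' v'\<bar> \<le> r / 3"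
    using periodic2_uniform_modulus[of "r / 3"] r by auto
  obtain n0 :: nat where n0: "1 / d < real n0" using reals_Archimedean2 by blast
  have "norm (?R n - ?I) < r" if "n \<ge> n0" for n
  proof -
    have "1 / d < real n" using n0 that by linarith
    moreover have "0 < 1 / d" using d by simp
    ultimately have "real n > 0" by linarith
    with \<open>1 / d < real n\<close> d have n: "n > 0" and "1 / real n \<le> d"
      by (simp_all add: field_simps)
    then have "\<bar>?R n - ?I\<bar> \<le> 2 * (r / 3)"
      using modulus by (intro double_riemann_sum_error) auto
    then show ?thesis using r by simp
  qed
  then show "\<exists>n0. \<forall>n\<ge>n0. norm (?R n - ?I) < r" by blast
qed

end

end

section \<open>Second moments of double sums\<close>

lemma abs_double_average_le:
  fixes a :: "nat \<Rightarrow> real" and w :: "nat \<Rightarrow> nat \<Rightarrow> real"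
  assumes a: "\<And>i. \<bar>a i\<bar> \<le> K" and w: "\<And>i j. 0 \<le> w i j" "\<And>i j. w i j \<le> 1"
  shows "\<bar>(\<Sum>i\<in>{1..n}. \<Sum>j\<in>{1..n}. a i * w i j) / (real n)\<^sup>2\<bar> \<le> K"
proof (cases "n = 0")
  case True
  then show ?thesis using a[of 0] by simp
next
  case False
  have "\<bar>a i * w i j\<bar> \<le> K" for i j
    using mult_mono[OF a[of i] w(2)[of i j]] w(1)[of i j] abs_ge_zero[of "a i"] a[of i]
    by (simp add: abs_mult)
  then have "\<bar>\<Sum>i\<in>{1..n}. \<Sum>j\<in>{1..n}. a i * w i j\<bar> \<le> (\<Sum>i\<in>{1..n}. \<Sum>j\<in>{1..n}. K)"
    by (intro order.trans[OF sum_abs sum_mono] order.trans[OF sum_abs sum_mono])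
  also have "\<dots> = K * (real n)\<^sup>2" by (simp add: power2_eq_square)
  finally show ?thesis using False by (simp add: field_simps)
qed

lemma sum_pair_overlaps:
  "(\<Sum>i\<in>{1..n}. \<Sum>j\<in>{1..n}. \<Sum>k\<in>{1..n}. \<Sum>l\<in>{1..n}.
     of_bool (i = k) + of_bool (i = l) + of_bool (j = k) + of_bool (j = l) :: real) = 4 * real n ^ 3"
  by (simp add: sum.distrib sum.delta sum.delta' power3_eq_cube of_bool_def sum_distrib_left[symmetric])

text \<open>Only the \<open>O(n\<^sup>3)\<close> quadruples whose index pairs overlap contribute to the second moment;
  each of them is counted by at least one of the four coincidences.\<close>

lemma (in prob_space) expectation_double_sum_sq_le:
  fixes X :: "nat \<Rightarrow> nat \<Rightarrow> 'a \<Rightarrow> real" and c :: "nat \<Rightarrow> nat \<Rightarrow> real"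
  assumes meas: "\<And>i j. X i j \<in> borel_measurable M"
    and bounded: "\<And>i j \<omega>. \<bar>X i j \<omega>\<bar> \<le> 1"
    and uncorrelated: "\<And>i j k l. {i, j} \<inter> {k, l} = {} \<Longrightarrow> expectation (\<lambda>\<omega>. X i j \<omega> * X k l \<omega>) = 0"
    and coeff: "\<And>i j. \<bar>c i j\<bar> \<le> B"
  shows "expectation (\<lambda>\<omega>. (\<Sum>i\<in>{1..n}. \<Sum>j\<in>{1..n}. c i j * X i j \<omega>)\<^sup>2) \<le> 4 * B\<^sup>2 * real n ^ 3"
proof -
  define overlaps :: "nat \<Rightarrow> nat \<Rightarrow> nat \<Rightarrow> nat \<Rightarrow> real" where
    "overlaps i j k l = of_bool (i = k) + of_bool (i = l) + of_bool (j = k) + of_bool (j = l)" for i j k l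
  have B_nonneg: "0 \<le> B" using coeff[of 0 0] by linarith
  have bounded_prod: "\<bar>X i j \<omega> * X k l \<omega>\<bar> \<le> 1" for i j k l \<omega>
    using bounded by (simp add: abs_mult mult_le_one)
  have integrable_prod: "integrable M (\<lambda>\<omega>. X i j \<omega> * X k l \<omega>)" for i j k l
    using bounded_prod
    by (intro integrable_const_bound[where B=1]) (auto intro: borel_measurable_times meas)
  have term_le: "c i j * c k l * expectation (\<lambda>\<omega>. X i j \<omega> * X k l \<omega>) \<le> B\<^sup>2 * overlaps i j k l"
    for i j k l
  proof (cases "{i, j} \<inter> {k, l} = {}")
    case True
    then show ?thesis by (simp add: uncorrelated overlaps_def)
  next
    case False
    then have "1 \<le> overlaps i j k l" by (auto simp: overlaps_def)
    have "- 1 \<le> expectation (\<lambda>\<omega>. X i j \<omega> * X k l \<omega>)"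
      by (rule integral_ge_const[OF integrable_prod]) (use bounded_prod in \<open>auto simp: abs_le_iff\<close>)
    moreover have "expectation (\<lambda>\<omega>. X i j \<omega> * X k l \<omega>) \<le> 1"
      by (rule integral_le_const[OF integrable_prod]) (use bounded_prod in \<open>auto simp: abs_le_iff\<close>)
    ultimately have "\<bar>expectation (\<lambda>\<omega>. X i j \<omega> * X k l \<omega>)\<bar> \<le> 1" by linarith
    moreover have "\<bar>c i j * c k l\<bar> \<le> B\<^sup>2"
      unfolding abs_mult power2_eq_square using B_nonneg by (intro mult_mono coeff) auto
    ultimately have "\<bar>c i j * c k l\<bar> * \<bar>expectation (\<lambda>\<omega>. X i j \<omega> * X k l \<omega>)\<bar> \<le> B\<^sup>2 * 1"
      by (intro mult_mono) auto
    then have "c i j * c k l * expectation (\<lambda>\<omega>. X i j \<omega> * X k l \<omega>) \<le> B\<^sup>2 * 1"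
      using abs_ge_self[of "c i j * c k l * expectation (\<lambda>\<omega>. X i j \<omega> * X k l \<omega>)"]
      by (simp add: abs_mult)
    also have "\<dots> \<le> B\<^sup>2 * overlaps i j k l"
      using \<open>1 \<le> overlaps i j k l\<close> by (intro mult_left_mono) auto
    finally show ?thesis .
  qed
  have "(\<Sum>i\<in>{1..n}. \<Sum>j\<in>{1..n}. c i j * X i j \<omega>)\<^sup>2
      = (\<Sum>i\<in>{1..n}. \<Sum>j\<in>{1..n}. \<Sum>k\<in>{1..n}. \<Sum>l\<in>{1..n}. c i j * c k l * (X i j \<omega> * X k l \<omega>))" for \<omega>
    unfolding power2_eq_square sum_distrib_right sum_distrib_left by (simp add: mult_ac)
  then have "expectation (\<lambda>\<omega>. (\<Sum>i\<in>{1..n}. \<Sum>j\<in>{1..n}. c i j * X i j \<omega>)\<^sup>2)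
      = (\<Sum>i\<in>{1..n}. \<Sum>j\<in>{1..n}. \<Sum>k\<in>{1..n}. \<Sum>l\<in>{1..n}.
          c i j * c k l * expectation (\<lambda>\<omega>. X i j \<omega> * X k l \<omega>))"
    by (simp add: integrable_prod integrable_sum)
  also have "\<dots> \<le> (\<Sum>i\<in>{1..n}. \<Sum>j\<in>{1..n}. \<Sum>k\<in>{1..n}. \<Sum>l\<in>{1..n}. B\<^sup>2 * overlaps i j k l)"
    by (intro sum_mono term_le)
  also have "\<dots> = 4 * B\<^sup>2 * real n ^ 3"
    using sum_pair_overlaps[of n] by (simp add: overlaps_def sum_distrib_left[symmetric])
  finally show ?thesis .
qed

section \<open>The noise distribution\<close>

locale iid_noise = prob_space M for M :: "'a measure" +
  fixes Z :: "nat \<Rightarrow> 'a \<Rightarrow> real" and \<phi> \<Phi> :: "real \<Rightarrow> real"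
  assumes indep_Z: "indep_vars (\<lambda>_. borel) Z UNIV"
    and distributed_Z: "\<And>i. distributed M lborel (Z i) (\<lambda>x. ennreal (\<phi> x))"
    and density_nonneg: "\<And>x. \<phi> x \<ge> 0"
    and Phi_eq: "\<And>t. \<Phi> t = measure M {\<omega> \<in> space M. Z 1 \<omega> \<le> t}"
begin

definition noise_law :: "real measure" where
  "noise_law = density lborel (\<lambda>x. ennreal (\<phi> x))"

lemma Z_measurable[measurable]: "Z i \<in> borel_measurable M"
  using distributed_Z[of i] unfolding distributed_def by (simp add: measurable_lborel1)

lemma density_measurable[measurable]: "\<phi> \<in> borel_measurable borel"
proof -
  have [measurable]: "(\<lambda>x. ennreal (\<phi> x)) \<in> borel_measurable borel"
    using distributed_Z[of 0] by (simp add: distributed_def)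
  have "\<phi> = (\<lambda>x. enn2real (ennreal (\<phi> x)))" using density_nonneg by simp
  also have "\<dots> \<in> borel_measurable borel" by measurable
  finally show ?thesis .
qed

lemma sets_noise_law[measurable_cong]: "sets noise_law = sets borel"
  by (simp add: noise_law_def)

lemma distr_Z: "distr M borel (Z i) = noise_law"
proof -
  have "distr M borel (Z i) = distr M lborel (Z i)" by (rule distr_cong) auto
  also have "\<dots> = noise_law" using distributed_Z[of i] unfolding distributed_def noise_law_def by simp
  finally show ?thesis .
qed

lemma real_distribution_noise_law: "real_distribution noise_law"
  using real_distribution_distr[of "Z 0"] by (simp add: distr_Z)

interpretation noise: real_distribution noise_law
  by (rule real_distribution_noise_law)

lemma Phi_eq_cdf: "\<Phi> = cdf noise_law"
proof
  fix t
  have "measure noise_law {..t} = measure M (Z 1 -` {..t} \<inter> space M)"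
    unfolding distr_Z[symmetric, of 1] by (rule measure_distr) auto
  then show "\<Phi> t = cdf noise_law t"
    unfolding Phi_eq cdf_def by (auto intro!: arg_cong[where f="measure M"])
qed

lemma Phi_nonneg: "0 \<le> \<Phi> t" and Phi_le_1: "\<Phi> t \<le> 1"
  unfolding Phi_eq_cdf by (simp_all add: noise.cdf_nonneg noise.cdf_bounded_prob)

lemma isCont_Phi: "isCont \<Phi> t"
proof -
  have "emeasure noise_law {t} = 0"
    unfolding noise_law_def by (subst emeasure_density) (auto intro!: nn_integral_null_set)
  then show ?thesis
    unfolding Phi_eq_cdf by (simp add: noise.isCont_cdf measure_def)
qed

lemma Phi_measurable[measurable]: "\<Phi> \<in> borel_measurable borel"
  using isCont_Phi by (intro borel_measurable_continuous_onI continuous_at_imp_continuous_on) auto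

lemma Phi2_eq_integral: "Phi2 \<Phi> \<phi> t = (\<integral>a. \<Phi> (t + a) \<partial>noise_law)"
proof -
  have "(\<integral>a. \<Phi> (t + a) \<partial>noise_law) = (\<integral>a. \<phi> a *\<^sub>R \<Phi> (t + a) \<partial>lborel)"
    unfolding noise_law_def by (rule integral_density) (auto simp: density_nonneg)
  then show ?thesis unfolding Phi2_def by (simp add: mult.commute)
qed

lemma integrable_Phi_shift: "integrable noise_law (\<lambda>a. \<Phi> (t + a))"
  by (rule noise.integrable_const_bound[where B=1]) (auto simp: Phi_nonneg Phi_le_1)

lemma Phi2_nonneg: "0 \<le> Phi2 \<Phi> \<phi> t" and Phi2_le_1: "Phi2 \<Phi> \<phi> t \<le> 1"
  unfolding Phi2_eq_integral
  by (auto intro!: noise.integral_ge_const noise.integral_le_const integrable_Phi_shift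
      simp: Phi_nonneg Phi_le_1)

lemma isCont_Phi2: "isCont (Phi2 \<Phi> \<phi>) t"
proof (rule continuous_at_sequentiallyI)
  fix u assume u: "u \<longlonglongrightarrow> t"
  have "(\<lambda>i. \<integral>a. \<Phi> (u i + a) \<partial>noise_law) \<longlonglongrightarrow> (\<integral>a. \<Phi> (t + a) \<partial>noise_law)"
  proof (rule integral_dominated_convergence[where w="\<lambda>_. 1"])
    show "AE a in noise_law. (\<lambda>i. \<Phi> (u i + a)) \<longlonglongrightarrow> \<Phi> (t + a)"
      by (intro AE_I2 isCont_tendsto_compose[OF isCont_Phi] tendsto_intros u)
  qed (auto simp: Phi_nonneg Phi_le_1)
  then show "(\<lambda>i. Phi2 \<Phi> \<phi> (u i)) \<longlonglongrightarrow> Phi2 \<Phi> \<phi> t" unfolding Phi2_eq_integral .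
qed

lemma continuous_on_Phi2_compose[continuous_intros]:
  "continuous_on S g \<Longrightarrow> continuous_on S (\<lambda>x. Phi2 \<Phi> \<phi> (g x))"
  using continuous_on_compose2[OF continuous_at_imp_continuous_on[OF ballI[OF isCont_Phi2]]]
  by blast

lemma indep_var_restrict:
  assumes disjoint: "I \<inter> J = {}"
    and h: "h \<in> borel_measurable (PiM I (\<lambda>_. borel))" and k: "k \<in> borel_measurable (PiM J (\<lambda>_. borel))"
  shows "indep_var borel (\<lambda>\<omega>. h (restrict (\<lambda>i. Z i \<omega>) I)) borel (\<lambda>\<omega>. k (restrict (\<lambda>i. Z i \<omega>) J))"
proof -
  define K where "K = case_bool I J"
  have "indep_vars (\<lambda>b. PiM (K b) (\<lambda>_. borel)) (\<lambda>b \<omega>. restrict (\<lambda>i. Z i \<omega>) (K b)) UNIV"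
    by (rule indep_vars_restrict[OF indep_Z])
      (use disjoint in \<open>auto simp: disjoint_family_on_def K_def split: bool.split\<close>)
  then have indep: "indep_vars (\<lambda>_. borel) (\<lambda>b \<omega>. case_bool h k b (restrict (\<lambda>i. Z i \<omega>) (K b))) UNIV"
    by (rule indep_vars_compose2) (use h k in \<open>auto simp: K_def split: bool.split\<close>)
  have borel: "case_bool borel borel = (\<lambda>b::bool. borel)"
    by (rule ext) (simp split: bool.split)
  have vars: "case_bool (\<lambda>\<omega>. h (restrict (\<lambda>i. Z i \<omega>) I)) (\<lambda>\<omega>. k (restrict (\<lambda>i. Z i \<omega>) J))
      = (\<lambda>b \<omega>. case_bool h k b (restrict (\<lambda>i. Z i \<omega>) (K b)))"
    by (rule ext) (simp add: K_def split: bool.split)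
  show ?thesis unfolding indep_var_def borel vars by (rule indep)
qed

lemma indep_var_Z: "i \<noteq> j \<Longrightarrow> indep_var borel (Z i) borel (Z j)"
  using indep_var_restrict[of "{i}" "{j}" "\<lambda>x. x i" "\<lambda>x. x j"]
  by (simp add: measurable_component_singleton)

lemma indep_var_pair_functions:
  fixes u v :: "real \<Rightarrow> real \<Rightarrow> real"
  assumes disjoint: "{i, j} \<inter> {k, l} = {}"
    and u: "(\<lambda>p. u (fst p) (snd p)) \<in> borel_measurable (borel \<Otimes>\<^sub>M borel)"
    and v: "(\<lambda>p. v (fst p) (snd p)) \<in> borel_measurable (borel \<Otimes>\<^sub>M borel)"
  shows "indep_var borel (\<lambda>\<omega>. u (Z i \<omega>) (Z j \<omega>)) borel (\<lambda>\<omega>. v (Z k \<omega>) (Z l \<omega>))"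
proof -
  have measurable_on_pair: "(\<lambda>x. w (x a) (x b)) \<in> borel_measurable (PiM {a, b} (\<lambda>_. borel))"
    if "(\<lambda>p. w (fst p) (snd p)) \<in> borel_measurable (borel \<Otimes>\<^sub>M borel)"
    for w :: "real \<Rightarrow> real \<Rightarrow> real" and a b
  proof -
    have "(\<lambda>x. (x a, x b)) \<in> measurable (PiM {a, b} (\<lambda>_. borel)) (borel \<Otimes>\<^sub>M borel)"
      by (intro measurable_Pair measurable_component_singleton) auto
    from measurable_comp[OF this that] show ?thesis by (simp add: comp_def)
  qed
  show ?thesis
    using indep_var_restrict[OF disjoint measurable_on_pair[OF u] measurable_on_pair[OF v]] by simp
qed

lemma expectation_le_shift:
  assumes "i \<noteq> j"
  shows "expectation (\<lambda>\<omega>. of_bool (Z j \<omega> \<le> Z i \<omega> + c)) = Phi2 \<Phi> \<phi> c"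
proof -
  interpret noise2: pair_prob_space noise_law noise_law ..
  define S where "S = {p :: real \<times> real. snd p \<le> fst p + c}"
  have "S = {p \<in> space (borel \<Otimes>\<^sub>M borel). snd p \<le> fst p + c}"
    by (auto simp: S_def space_pair_measure)
  also have "\<dots> \<in> sets (borel \<Otimes>\<^sub>M borel)" by measurable
  finally have S[measurable]: "S \<in> sets (borel \<Otimes>\<^sub>M borel)" .
  have "expectation (\<lambda>\<omega>. of_bool (Z j \<omega> \<le> Z i \<omega> + c))
      = expectation (\<lambda>\<omega>. indicator S (Z i \<omega>, Z j \<omega>) :: real)"
    by (simp add: S_def indicator_def)
  also have "\<dots> = (\<integral>p. indicator S p \<partial>distr M (borel \<Otimes>\<^sub>M borel) (\<lambda>\<omega>. (Z i \<omega>, Z j \<omega>)))"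
    by (subst Bochner_Integration.integral_distr) auto
  also have "distr M (borel \<Otimes>\<^sub>M borel) (\<lambda>\<omega>. (Z i \<omega>, Z j \<omega>)) = noise_law \<Otimes>\<^sub>M noise_law"
    using indep_var_Z[OF assms] unfolding indep_var_distribution_eq distr_Z by simp
  also have "(\<integral>p. indicator S p \<partial>(noise_law \<Otimes>\<^sub>M noise_law))
      = (\<integral>a. (\<integral>b. indicator S (a, b) \<partial>noise_law) \<partial>noise_law :: real)"
    by (rule noise2.integral_fst'[symmetric]) (auto intro: noise2.P.integrable_const_bound[where B=1])
  also have "\<dots> = (\<integral>a. \<Phi> (c + a) \<partial>noise_law)"
  proof (rule Bochner_Integration.integral_cong[OF refl])
    fix a
    have "(\<integral>b. indicator S (a, b) \<partial>noise_law) = (\<integral>b. indicator {..a + c} b \<partial>noise_law :: real)"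
      by (rule Bochner_Integration.integral_cong) (auto simp: S_def indicator_def)
    then show "(\<integral>b. indicator S (a, b) \<partial>noise_law) = \<Phi> (c + a)"
      by (simp add: Phi_eq_cdf cdf_def add.commute)
  qed
  finally show ?thesis by (simp add: Phi2_eq_integral)
qed

end

section \<open>The rank criterion, its mean and its limit\<close>

locale template_model = iid_noise +
  fixes f :: "real \<Rightarrow> real" and \<theta>s :: real
  assumes lipschitz_f: "\<exists>L. lipschitz_on L UNIV f"
    and periodic_f: "\<forall>x. f (x + 1) = f x"
begin

definition lip_f :: real where "lip_f = (SOME L. lipschitz_on L UNIV f)"

definition bound_f :: real where "bound_f = \<bar>f 0\<bar> + lip_f"

lemma lipschitz_on_f: "lipschitz_on lip_f UNIV f"
  unfolding lip_f_def using lipschitz_f by (rule someI_ex)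

lemma lip_f_nonneg: "0 \<le> lip_f"
  using lipschitz_on_f by (simp add: lipschitz_on_def)

lemma abs_f_diff_le: "\<bar>f x - f y\<bar> \<le> lip_f * \<bar>x - y\<bar>"
  using lipschitz_on_f by (simp add: lipschitz_on_def dist_real_def)

lemma f_plus_1: "f (x + 1) = f x"
  using periodic_f by simp

lemma f_frac: "f (frac x) = f x"
proof -
  interpret periodic_fun_simple' f by standard (rule f_plus_1)
  show ?thesis by (simp add: frac_def minus_of_int)
qed

lemma abs_f_le: "\<bar>f x\<bar> \<le> bound_f"
proof -
  have "\<bar>f (frac x) - f 0\<bar> \<le> lip_f * \<bar>frac x - 0\<bar>" by (rule abs_f_diff_le)
  also have "\<dots> \<le> lip_f * 1"
    using frac_lt_1[of x] lip_f_nonneg by (intro mult_left_mono) auto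
  finally show ?thesis unfolding bound_f_def f_frac by linarith
qed

lemma bound_f_nonneg: "0 \<le> bound_f"
  using abs_f_le[of 0] by linarith

lemma continuous_on_f_compose[continuous_intros]: "continuous_on S g \<Longrightarrow> continuous_on S (\<lambda>x. f (g x))"
  using continuous_on_compose2[OF lipschitz_on_continuous_on[OF lipschitz_on_f]] by blast

definition signal :: "nat \<Rightarrow> nat \<Rightarrow> real" where
  "signal n i = f (real i / real n - \<theta>s)"

definition rank_ind :: "nat \<Rightarrow> nat \<Rightarrow> nat \<Rightarrow> 'a \<Rightarrow> real" where
  "rank_ind n i j \<omega> = of_bool (signal n j + Z j \<omega> \<le> signal n i + Z i \<omega>)"

definition rank_ind_mean :: "nat \<Rightarrow> nat \<Rightarrow> nat \<Rightarrow> real" where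
  "rank_ind_mean n i j = (if i = j then 1 else Phi2 \<Phi> \<phi> (signal n i - signal n j))"

definition crit :: "nat \<Rightarrow> real \<Rightarrow> 'a \<Rightarrow> real" where
  "crit n \<theta> \<omega> = (\<Sum>i\<in>{1..n}. \<Sum>j\<in>{1..n}. f (real i / real n - \<theta>) * rank_ind n i j \<omega>) / (real n)\<^sup>2"

definition mean_crit :: "nat \<Rightarrow> real \<Rightarrow> real" where
  "mean_crit n \<theta> = (\<Sum>i\<in>{1..n}. \<Sum>j\<in>{1..n}. f (real i / real n - \<theta>) * rank_ind_mean n i j) / (real n)\<^sup>2"

lemma rank_ind_measurable[measurable]: "rank_ind n i j \<in> borel_measurable M"
  unfolding rank_ind_def[abs_def] by measurable

lemma crit_measurable[measurable]: "crit n \<theta> \<in> borel_measurable M"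
  unfolding crit_def[abs_def] by measurable

lemma rank_ind_bounds: "0 \<le> rank_ind n i j \<omega>" "rank_ind n i j \<omega> \<le> 1"
  by (simp_all add: rank_ind_def)

lemma rank_ind_mean_bounds: "0 \<le> rank_ind_mean n i j" "rank_ind_mean n i j \<le> 1"
  by (simp_all add: rank_ind_mean_def Phi2_nonneg Phi2_le_1)

lemma integrable_rank_ind: "integrable M (rank_ind n i j)"
  by (rule integrable_const_bound[where B=1]) (auto simp: rank_ind_def)

lemma Mhat_eq_crit: "Mhat f (\<lambda>i. signal n i + Z i \<omega>) n \<theta> = crit n \<theta> \<omega>"
proof -
  have "real (rank (\<lambda>i. signal n i + Z i \<omega>) n i) = (\<Sum>j\<in>{1..n}. rank_ind n i j \<omega>)" for i
    by (simp add: rank_def rank_ind_def Int_def)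
  then show ?thesis
    by (simp add: Mhat_def crit_def sum_distrib_left sum_divide_distrib power2_eq_square mult_ac)
qed

lemma expectation_rank_ind: "expectation (rank_ind n i j) = rank_ind_mean n i j"
proof (cases "i = j")
  case False
  have "rank_ind n i j = (\<lambda>\<omega>. of_bool (Z j \<omega> \<le> Z i \<omega> + (signal n i - signal n j)))"
    by (auto simp: rank_ind_def)
  then show ?thesis using expectation_le_shift[OF False] False by (simp add: rank_ind_mean_def)
qed (simp add: rank_ind_def[abs_def] rank_ind_mean_def prob_space)

lemma expectation_crit: "expectation (crit n \<theta>) = mean_crit n \<theta>"
  by (simp add: crit_def[abs_def] mean_crit_def integrable_rank_ind integrable_sum expectation_rank_ind)

lemma abs_crit_le: "\<bar>crit n \<theta> \<omega>\<bar> \<le> bound_f"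
  unfolding crit_def by (rule abs_double_average_le) (simp_all add: abs_f_le rank_ind_bounds)

lemma abs_mean_crit_le: "\<bar>mean_crit n \<theta>\<bar> \<le> bound_f"
  unfolding mean_crit_def by (rule abs_double_average_le) (simp_all add: abs_f_le rank_ind_mean_bounds)

lemma uncorrelated_rank_ind:
  assumes disjoint: "{i, j} \<inter> {k, l} = {}"
  shows "expectation (\<lambda>\<omega>. (rank_ind n i j \<omega> - rank_ind_mean n i j)
    * (rank_ind n k l \<omega> - rank_ind_mean n k l)) = 0"
proof -
  define u where "u a b = of_bool (signal n j + b \<le> signal n i + a) - rank_ind_mean n i j" for a b :: real
  define v where "v a b = of_bool (signal n l + b \<le> signal n k + a) - rank_ind_mean n k l" for a b :: real
  have "indep_var borel (\<lambda>\<omega>. u (Z i \<omega>) (Z j \<omega>)) borel (\<lambda>\<omega>. v (Z k \<omega>) (Z l \<omega>))"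
    by (rule indep_var_pair_functions[OF disjoint]) (unfold u_def v_def, measurable)
  moreover have "(\<lambda>\<omega>. u (Z i \<omega>) (Z j \<omega>)) = (\<lambda>\<omega>. rank_ind n i j \<omega> - rank_ind_mean n i j)"
    and "(\<lambda>\<omega>. v (Z k \<omega>) (Z l \<omega>)) = (\<lambda>\<omega>. rank_ind n k l \<omega> - rank_ind_mean n k l)"
    by (simp_all add: u_def v_def rank_ind_def)
  ultimately have "expectation (\<lambda>\<omega>. (rank_ind n i j \<omega> - rank_ind_mean n i j)
        * (rank_ind n k l \<omega> - rank_ind_mean n k l))
      = expectation (\<lambda>\<omega>. rank_ind n i j \<omega> - rank_ind_mean n i j)
        * expectation (\<lambda>\<omega>. rank_ind n k l \<omega> - rank_ind_mean n k l)"
    by (intro indep_var_lebesgue_integral) (auto intro: integrable_rank_ind)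
  then show ?thesis by (simp add: integrable_rank_ind expectation_rank_ind prob_space)
qed

lemma variance_crit_le:
  assumes n: "n > 0"
  shows "variance (crit n \<theta>) \<le> 4 * bound_f\<^sup>2 / real n"
proof -
  define S where "S \<omega> = (\<Sum>i\<in>{1..n}. \<Sum>j\<in>{1..n}.
    f (real i / real n - \<theta>) * (rank_ind n i j \<omega> - rank_ind_mean n i j))" for \<omega>
  have "crit n \<theta> \<omega> - mean_crit n \<theta> = S \<omega> / (real n)\<^sup>2" for \<omega>
    by (simp add: S_def crit_def mean_crit_def diff_divide_distrib[symmetric]
        sum_subtractf[symmetric] right_diff_distrib)
  then have "variance (crit n \<theta>) = expectation (\<lambda>\<omega>. (S \<omega>)\<^sup>2) / real n ^ 4"
    by (simp add: expectation_crit power_divide power_mult[symmetric])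
  also have "\<dots> \<le> 4 * bound_f\<^sup>2 * real n ^ 3 / real n ^ 4"
  proof -
    have "\<bar>rank_ind n i j \<omega> - rank_ind_mean n i j\<bar> \<le> 1" for i j \<omega>
      using rank_ind_bounds[of n i j \<omega>] rank_ind_mean_bounds[of n i j] by (simp add: abs_le_iff)
    then show ?thesis
      unfolding S_def
      by (intro divide_right_mono expectation_double_sum_sq_le uncorrelated_rank_ind)
        (simp_all add: abs_f_le)
  qed
  also have "\<dots> = 4 * bound_f\<^sup>2 / real n"
    using n by (simp add: power_eq_if)
  finally show ?thesis .
qed

lemma prob_crit_deviation_le:
  assumes n: "n > 0" and \<delta>: "\<delta> > 0"
  shows "prob {\<omega> \<in> space M. \<delta> \<le> \<bar>crit n \<theta> \<omega> - mean_crit n \<theta>\<bar>} \<le> 4 * bound_f\<^sup>2 / (real n * \<delta>\<^sup>2)"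
proof -
  have "integrable M (\<lambda>\<omega>. (crit n \<theta> \<omega>)\<^sup>2)"
  proof (rule integrable_const_bound[where B="bound_f\<^sup>2"])
    have "(crit n \<theta> \<omega>)\<^sup>2 \<le> bound_f\<^sup>2" for \<omega>
      using power_mono[OF abs_crit_le[of n \<theta> \<omega>] abs_ge_zero, of 2] by simp
    then show "AE \<omega> in M. norm ((crit n \<theta> \<omega>)\<^sup>2) \<le> bound_f\<^sup>2" by simp
  qed measurable
  then have "prob {\<omega> \<in> space M. \<delta> \<le> \<bar>crit n \<theta> \<omega> - mean_crit n \<theta>\<bar>} \<le> variance (crit n \<theta>) / \<delta>\<^sup>2"
    using Chebyshev_inequality[of "crit n \<theta>" \<delta>] \<delta> by (simp add: expectation_crit)
  also have "\<dots> \<le> (4 * bound_f\<^sup>2 / real n) / \<delta>\<^sup>2"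
    by (intro divide_right_mono variance_crit_le n) simp
  finally show ?thesis by (simp add: field_simps)
qed

definition pop_integrand :: "real \<Rightarrow> real \<Rightarrow> real \<Rightarrow> real" where
  "pop_integrand \<theta> u v = Phi2 \<Phi> \<phi> (f u - f v) * f (u + \<theta>s - \<theta>)"

abbreviation pop_crit :: "real \<Rightarrow> real" where
  "pop_crit \<equiv> Mpop f \<Phi> \<phi> \<theta>s"

lemma continuous_on_pop_integrand: "continuous_on UNIV (\<lambda>(u, v). pop_integrand \<theta> u v)"
  unfolding pop_integrand_def split_beta by (intro continuous_intros)

lemma pop_integrand_plus_1:
  "pop_integrand \<theta> (u + 1) v = pop_integrand \<theta> u v" "pop_integrand \<theta> u (v + 1) = pop_integrand \<theta> u v"
proof -
  have "u + 1 + \<theta>s - \<theta> = (u + \<theta>s - \<theta>) + 1" by simp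
  then show "pop_integrand \<theta> (u + 1) v = pop_integrand \<theta> u v"
    unfolding pop_integrand_def by (simp only: f_plus_1)
  show "pop_integrand \<theta> u (v + 1) = pop_integrand \<theta> u v"
    unfolding pop_integrand_def by (simp only: f_plus_1)
qed

lemma pop_crit_eq_integral: "pop_crit \<theta> = integral {0..1} (\<lambda>u. integral {0..1} (pop_integrand \<theta> u))"
proof -
  have LBINT_eq_integral: "(LBINT x=0..1. g x) = integral {0..1} g"
    if "continuous_on UNIV g" for g :: "real \<Rightarrow> real"
    using interval_integral_eq_integral[of 0 1 g] that
    by (simp add: zero_ereal_def one_ereal_def borel_integrable_atLeastAtMost' continuous_on_subset)
  have "pop_crit \<theta> = (LBINT u=0..1. (LBINT v=0..1. pop_integrand \<theta> u v))"
    unfolding Mpop_def pop_integrand_def ..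
  also have "\<dots> = (LBINT u=0..1. integral {0..1} (pop_integrand \<theta> u))"
    by (simp only: LBINT_eq_integral continuous_on_section continuous_on_pop_integrand)
  also have "\<dots> = integral {0..1} (\<lambda>u. integral {0..1} (pop_integrand \<theta> u))"
    by (intro LBINT_eq_integral continuous_on_integral_section continuous_on_pop_integrand)
  finally show ?thesis .
qed

definition pop_riemann_sum :: "nat \<Rightarrow> real \<Rightarrow> real" where
  "pop_riemann_sum n \<theta> = (\<Sum>i=1..n. \<Sum>j=1..n.
     pop_integrand \<theta> (real i / real n - \<theta>s) (real j / real n - \<theta>s)) / (real n)\<^sup>2"

lemma pop_riemann_sum_tendsto: "(\<lambda>n. pop_riemann_sum n \<theta>) \<longlonglongrightarrow> pop_crit \<theta>"
  using double_riemann_sum_tendsto[OF continuous_on_pop_integrand pop_integrand_plus_1, where s="- \<theta>s"]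
  by (simp add: pop_riemann_sum_def pop_crit_eq_integral)

text \<open>At the points \<open>x_i - \<theta>\<^sup>*\<close> the population integrand is \<open>f(x_i - \<theta>) \<Phi>\<^sub>2(signal_i - signal_j)\<close>,
  the mean of \<open>f(x_i - \<theta>) 1{Y_j \<le> Y_i}\<close> for \<open>i \<noteq> j\<close>; on the diagonal that mean is \<open>1\<close>
  instead of \<open>\<Phi>\<^sub>2(0)\<close>.\<close>

lemma abs_mean_crit_minus_pop_riemann_sum_le: "\<bar>mean_crit n \<theta> - pop_riemann_sum n \<theta>\<bar> \<le> bound_f / real n"
proof -
  have "f (real i / real n - \<theta>) * rank_ind_mean n i j
      - pop_integrand \<theta> (real i / real n - \<theta>s) (real j / real n - \<theta>s)
      = (if j = i then f (real i / real n - \<theta>) * (1 - Phi2 \<Phi> \<phi> 0) else 0)" for i j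
    by (auto simp: rank_ind_mean_def pop_integrand_def signal_def algebra_simps)
  then have "mean_crit n \<theta> - pop_riemann_sum n \<theta>
      = (\<Sum>i=1..n. f (real i / real n - \<theta>) * (1 - Phi2 \<Phi> \<phi> 0)) / (real n)\<^sup>2"
    unfolding mean_crit_def pop_riemann_sum_def diff_divide_distrib[symmetric] sum_subtractf[symmetric]
    by (simp add: sum.delta)
  also have "\<bar>\<dots>\<bar> \<le> (\<Sum>i=1..n. bound_f) / (real n)\<^sup>2"
  proof -
    have "\<bar>f (real i / real n - \<theta>) * (1 - Phi2 \<Phi> \<phi> 0)\<bar> \<le> bound_f" for i
      using mult_mono[OF abs_f_le, of "\<bar>1 - Phi2 \<Phi> \<phi> 0\<bar>" 1] Phi2_nonneg[of 0] Phi2_le_1[of 0]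
        bound_f_nonneg
      by (simp add: abs_mult)
    then have "\<bar>\<Sum>i=1..n. f (real i / real n - \<theta>) * (1 - Phi2 \<Phi> \<phi> 0)\<bar> \<le> (\<Sum>i=1..n. bound_f)"
      by (intro order.trans[OF sum_abs sum_mono])
    then show ?thesis by (simp add: divide_right_mono)
  qed
  also have "\<dots> = bound_f / real n" by (simp add: power2_eq_square)
  finally show ?thesis .
qed

lemma mean_crit_tendsto: "(\<lambda>n. mean_crit n \<theta>) \<longlonglongrightarrow> pop_crit \<theta>"
proof -
  have "(\<lambda>n. mean_crit n \<theta> - pop_riemann_sum n \<theta>) \<longlonglongrightarrow> 0"
    using abs_mean_crit_minus_pop_riemann_sum_le
    by (intro Lim_null_comparison[OF always_eventually lim_const_over_n[of bound_f]]) simp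
  from tendsto_add[OF this pop_riemann_sum_tendsto[of \<theta>]] show ?thesis by simp
qed

end

section \<open>Uniformity in the shift\<close>

context
  fixes G :: "real \<Rightarrow> real" and C K :: real
  assumes abs_le: "\<And>\<theta>. \<bar>G \<theta>\<bar> \<le> C"
    and abs_diff_le: "\<And>\<theta> \<theta>'. \<bar>G \<theta> - G \<theta>'\<bar> \<le> K * \<bar>\<theta> - \<theta>'\<bar>"
begin

private lemma bdd_above_range: "bdd_above (range G)"
  using abs_le by (intro bdd_aboveI[where M=C]) (auto simp: abs_le_iff)

private lemma lipschitz_constant_nonneg: "0 \<le> K"
  using abs_diff_le[of 1 0] by simp

lemma SUP_gt_iff_Rats: "\<epsilon> < (SUP \<theta>. G \<theta>) \<longleftrightarrow> (\<exists>q\<in>\<rat>. \<epsilon> < G q)"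
proof
  assume "\<epsilon> < (SUP \<theta>. G \<theta>)"
  then obtain \<theta> where \<theta>: "\<epsilon> < G \<theta>"
    using less_cSUP_iff[OF _ bdd_above_range] by auto
  define r where "r = (G \<theta> - \<epsilon>) / (K + 1)"
  have r: "r > 0" using \<theta> lipschitz_constant_nonneg by (simp add: r_def)
  obtain q where q: "q \<in> \<rat>" "\<theta> < q" "q < \<theta> + r"
    using Rats_dense_in_real[of \<theta> "\<theta> + r"] r by auto
  have "\<bar>G \<theta> - G q\<bar> \<le> K * \<bar>\<theta> - q\<bar>" by (rule abs_diff_le)
  also have "\<dots> \<le> K * r" using q lipschitz_constant_nonneg by (intro mult_left_mono) auto
  also have "\<dots> < G \<theta> - \<epsilon>" using r \<theta> lipschitz_constant_nonneg by (simp add: r_def field_simps)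
  finally have "\<epsilon> < G q" by linarith
  with q show "\<exists>q\<in>\<rat>. \<epsilon> < G q" by blast
next
  assume "\<exists>q\<in>\<rat>. \<epsilon> < G q"
  then show "\<epsilon> < (SUP \<theta>. G \<theta>)"
    using cSUP_upper[OF _ bdd_above_range] by (blast intro: order.strict_trans2)
qed

lemma SUP_gt_imp_grid_gt:
  assumes periodic: "\<And>\<theta>. G (\<theta> + 1) = G \<theta>" and N: "N > 0" and fine: "K / real N \<le> \<epsilon> / 2"
    and SUP_gt: "\<epsilon> < (SUP \<theta>. G \<theta>)"
  shows "\<exists>k<N. \<epsilon> / 2 < G (real k / real N)"
proof -
  interpret periodic_fun_simple' G by standard (rule periodic)
  obtain \<theta> where \<theta>: "\<epsilon> < G \<theta>"
    using SUP_gt less_cSUP_iff[OF _ bdd_above_range] by auto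
  define t where "t = frac \<theta>"
  have t: "0 \<le> t" "t < 1"
    by (simp_all add: t_def frac_lt_1)
  have "G t = G \<theta>"
    by (simp add: t_def frac_def minus_of_int)
  define k where "k = nat \<lfloor>t * real N\<rfloor>"
  have "0 \<le> t * real N" using t by simp
  then have k: "real k \<le> t * real N" "t * real N < real k + 1"
    unfolding k_def by linarith+
  moreover have "t * real N < real N" using t N by simp
  ultimately have "k < N" by linarith
  have "real k / real N \<le> t" "t < real k / real N + 1 / real N"
    using k N by (simp_all add: field_simps)
  then have "\<bar>t - real k / real N\<bar> \<le> 1 / real N" by simp
  then have "K * \<bar>t - real k / real N\<bar> \<le> K / real N"
    using mult_left_mono[OF _ lipschitz_constant_nonneg] by fastforce
  then have "\<bar>G t - G (real k / real N)\<bar> \<le> K / real N"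
    using abs_diff_le[of t "real k / real N"] by linarith
  then have "\<epsilon> / 2 < G (real k / real N)"
    using \<theta> \<open>G t = G \<theta>\<close> fine by linarith
  with \<open>k < N\<close> show ?thesis by blast
qed

end

context template_model
begin

lemma f_shift_plus_1: "f (x - (\<theta> + 1)) = f (x - \<theta>)"
  using f_plus_1[of "x - (\<theta> + 1)"] by simp

lemma crit_plus_1: "crit n (\<theta> + 1) \<omega> = crit n \<theta> \<omega>"
  unfolding crit_def f_shift_plus_1 ..

lemma mean_crit_plus_1: "mean_crit n (\<theta> + 1) = mean_crit n \<theta>"
  unfolding mean_crit_def f_shift_plus_1 ..

lemma pop_crit_plus_1: "pop_crit (\<theta> + 1) = pop_crit \<theta>"
  using mean_crit_tendsto[of "\<theta> + 1"] mean_crit_tendsto[of \<theta>] unfolding mean_crit_plus_1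
  by (rule LIMSEQ_unique)

lemma abs_f_shift_diff_le: "\<bar>f (x - \<theta>) - f (x - \<theta>')\<bar> \<le> lip_f * \<bar>\<theta> - \<theta>'\<bar>"
  using abs_f_diff_le[of "x - \<theta>" "x - \<theta>'"] by (simp add: abs_minus_commute)

lemma abs_crit_diff_le: "\<bar>crit n \<theta> \<omega> - crit n \<theta>' \<omega>\<bar> \<le> lip_f * \<bar>\<theta> - \<theta>'\<bar>"
proof -
  have "crit n \<theta> \<omega> - crit n \<theta>' \<omega> = (\<Sum>i\<in>{1..n}. \<Sum>j\<in>{1..n}.
      (f (real i / real n - \<theta>) - f (real i / real n - \<theta>')) * rank_ind n i j \<omega>) / (real n)\<^sup>2"
    by (simp add: crit_def diff_divide_distrib[symmetric] sum_subtractf[symmetric] left_diff_distrib)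
  also have "\<bar>\<dots>\<bar> \<le> lip_f * \<bar>\<theta> - \<theta>'\<bar>"
    by (rule abs_double_average_le) (simp_all add: abs_f_shift_diff_le rank_ind_bounds)
  finally show ?thesis .
qed

lemma abs_mean_crit_diff_le: "\<bar>mean_crit n \<theta> - mean_crit n \<theta>'\<bar> \<le> lip_f * \<bar>\<theta> - \<theta>'\<bar>"
proof -
  have "mean_crit n \<theta> - mean_crit n \<theta>' = (\<Sum>i\<in>{1..n}. \<Sum>j\<in>{1..n}.
      (f (real i / real n - \<theta>) - f (real i / real n - \<theta>')) * rank_ind_mean n i j) / (real n)\<^sup>2"
    by (simp add: mean_crit_def diff_divide_distrib[symmetric] sum_subtractf[symmetric] left_diff_distrib)
  also have "\<bar>\<dots>\<bar> \<le> lip_f * \<bar>\<theta> - \<theta>'\<bar>"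
    by (rule abs_double_average_le) (simp_all add: abs_f_shift_diff_le rank_ind_mean_bounds)
  finally show ?thesis .
qed

lemma abs_pop_crit_diff_le: "\<bar>pop_crit \<theta> - pop_crit \<theta>'\<bar> \<le> lip_f * \<bar>\<theta> - \<theta>'\<bar>"
  using tendsto_rabs[OF tendsto_diff[OF mean_crit_tendsto[of \<theta>] mean_crit_tendsto[of \<theta>']]]
  by (rule LIMSEQ_le_const2) (simp add: abs_mean_crit_diff_le)

lemma abs_pop_crit_le: "\<bar>pop_crit \<theta>\<bar> \<le> bound_f"
  using tendsto_rabs[OF mean_crit_tendsto[of \<theta>]]
  by (rule LIMSEQ_le_const2) (simp add: abs_mean_crit_le)

definition crit_error :: "nat \<Rightarrow> real \<Rightarrow> 'a \<Rightarrow> real" where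
  "crit_error n \<theta> \<omega> = \<bar>crit n \<theta> \<omega> - pop_crit \<theta>\<bar>"

lemma crit_error_measurable[measurable]: "crit_error n \<theta> \<in> borel_measurable M"
  unfolding crit_error_def[abs_def] by measurable

lemma abs_crit_error_le: "\<bar>crit_error n \<theta> \<omega>\<bar> \<le> 2 * bound_f"
  using abs_crit_le[of n \<theta> \<omega>] abs_pop_crit_le[of \<theta>] unfolding crit_error_def by linarith

lemma abs_crit_error_diff_le: "\<bar>crit_error n \<theta> \<omega> - crit_error n \<theta>' \<omega>\<bar> \<le> 2 * lip_f * \<bar>\<theta> - \<theta>'\<bar>"
  using abs_crit_diff_le[of n \<theta> \<omega> \<theta>'] abs_pop_crit_diff_le[of \<theta> \<theta>'] unfolding crit_error_def by linarith

lemma crit_error_plus_1: "crit_error n (\<theta> + 1) \<omega> = crit_error n \<theta> \<omega>"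
  unfolding crit_error_def crit_plus_1 pop_crit_plus_1 ..

lemma sets_SUP_crit_error_gt: "{\<omega> \<in> space M. \<epsilon> < (SUP \<theta>. crit_error n \<theta> \<omega>)} \<in> sets M"
proof -
  have "{\<omega> \<in> space M. \<epsilon> < (SUP \<theta>. crit_error n \<theta> \<omega>)} = (\<Union>q\<in>\<rat>. {\<omega> \<in> space M. \<epsilon> < crit_error n q \<omega>})"
    using SUP_gt_iff_Rats[OF abs_crit_error_le abs_crit_error_diff_le] by blast
  also have "\<dots> \<in> sets M"
    by (intro sets.countable_UN'' countable_rat) measurable
  finally show ?thesis .
qed

lemma prob_SUP_crit_error_gt_le:
  assumes n: "n > 0" and N: "N > 0" and \<epsilon>: "\<epsilon> > 0" and fine: "2 * lip_f / real N \<le> \<epsilon> / 2"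
    and grid_close: "\<forall>k<N. \<bar>mean_crit n (real k / real N) - pop_crit (real k / real N)\<bar> < \<epsilon> / 4"
  shows "prob {\<omega> \<in> space M. \<epsilon> < (SUP \<theta>. crit_error n \<theta> \<omega>)}
    \<le> real N * (4 * bound_f\<^sup>2 / (real n * (\<epsilon> / 4)\<^sup>2))"
proof -
  define dev where "dev k = {\<omega> \<in> space M.
    \<epsilon> / 4 \<le> \<bar>crit n (real k / real N) \<omega> - mean_crit n (real k / real N)\<bar>}" for k
  have "{\<omega> \<in> space M. \<epsilon> < (SUP \<theta>. crit_error n \<theta> \<omega>)} \<subseteq> (\<Union>k\<in>{..<N}. dev k)"
  proof safe
    fix \<omega> assume "\<omega> \<in> space M" and "\<epsilon> < (SUP \<theta>. crit_error n \<theta> \<omega>)"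
    then obtain k where "k < N" "\<epsilon> / 2 < crit_error n (real k / real N) \<omega>"
      using SUP_gt_imp_grid_gt[OF abs_crit_error_le abs_crit_error_diff_le crit_error_plus_1 N fine]
      by blast
    moreover have "\<bar>mean_crit n (real k / real N) - pop_crit (real k / real N)\<bar> < \<epsilon> / 4"
      using grid_close \<open>k < N\<close> by blast
    ultimately have "\<epsilon> / 4 \<le> \<bar>crit n (real k / real N) \<omega> - mean_crit n (real k / real N)\<bar>"
      using abs_triangle_ineq[of "crit n (real k / real N) \<omega> - mean_crit n (real k / real N)"
          "mean_crit n (real k / real N) - pop_crit (real k / real N)"]
      unfolding crit_error_def by linarith
    then have "\<omega> \<in> dev k" using \<open>\<omega> \<in> space M\<close> by (simp add: dev_def)
    with \<open>k < N\<close> show "\<omega> \<in> (\<Union>k\<in>{..<N}. dev k)" by blast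
  qed
  then have "prob {\<omega> \<in> space M. \<epsilon> < (SUP \<theta>. crit_error n \<theta> \<omega>)} \<le> prob (\<Union>k\<in>{..<N}. dev k)"
    by (intro finite_measure_mono) (auto simp: dev_def)
  also have "\<dots> \<le> (\<Sum>k<N. prob (dev k))"
    by (intro finite_measure_subadditive_finite) (auto simp: dev_def)
  also have "\<dots> \<le> (\<Sum>k<N. 4 * bound_f\<^sup>2 / (real n * (\<epsilon> / 4)\<^sup>2))"
    unfolding dev_def using n \<epsilon> by (intro sum_mono prob_crit_deviation_le) auto
  finally show ?thesis by simp
qed

lemma prob_SUP_crit_error_gt_tendsto:
  assumes \<epsilon>: "\<epsilon> > 0"
  shows "(\<lambda>n. prob {\<omega> \<in> space M. \<epsilon> < (SUP \<theta>. crit_error n \<theta> \<omega>)}) \<longlonglongrightarrow> 0"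
proof -
  define N :: nat where "N = nat \<lceil>4 * lip_f / \<epsilon>\<rceil> + 1"
  have N: "N > 0" by (simp add: N_def)
  have "4 * lip_f / \<epsilon> \<le> real N" unfolding N_def by linarith
  with \<epsilon> N have fine: "2 * lip_f / real N \<le> \<epsilon> / 2" by (simp add: field_simps)
  define C where "C = real N * (4 * bound_f\<^sup>2 / (\<epsilon> / 4)\<^sup>2)"
  have bound: "prob {\<omega> \<in> space M. \<epsilon> < (SUP \<theta>. crit_error n \<theta> \<omega>)} \<le> C / real n"
    if "n > 0" and "\<forall>k<N. \<bar>mean_crit n (real k / real N) - pop_crit (real k / real N)\<bar> < \<epsilon> / 4" for n
  proof -
    have "prob {\<omega> \<in> space M. \<epsilon> < (SUP \<theta>. crit_error n \<theta> \<omega>)}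
        \<le> real N * (4 * bound_f\<^sup>2 / (real n * (\<epsilon> / 4)\<^sup>2))"
      by (rule prob_SUP_crit_error_gt_le[OF that(1) N \<epsilon> fine that(2)])
    also have "\<dots> = C / real n"
      by (simp add: C_def)
    finally show ?thesis .
  qed
  have "\<forall>\<^sub>F n in sequentially. \<forall>k\<in>{..<N}.
      \<bar>mean_crit n (real k / real N) - pop_crit (real k / real N)\<bar> < \<epsilon> / 4"
    using \<epsilon> by (intro eventually_ball_finite ballI tendstoD[OF mean_crit_tendsto, unfolded dist_real_def])
      auto
  then have "\<forall>\<^sub>F n in sequentially.
      norm (prob {\<omega> \<in> space M. \<epsilon> < (SUP \<theta>. crit_error n \<theta> \<omega>)}) \<le> C / real n"
    using eventually_gt_at_top[of 0] by eventually_elim (simp add: bound)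
  then show ?thesis
    by (rule Lim_null_comparison) (rule lim_const_over_n)
qed

end

theorem lemma1:
  fixes M :: "'a measure" and f :: "real \<Rightarrow> real" and Z :: "nat \<Rightarrow> 'a \<Rightarrow> real"
    and \<phi> \<Phi> :: "real \<Rightarrow> real" and \<theta>s :: real
  assumes P: "prob_space M"
    and lip: "\<exists>L. lipschitz_on L UNIV f"
    and per: "\<forall>x. f (x + 1) = f x"
    and exact: "\<forall>\<theta>. (\<theta> - \<theta>s) \<notin> \<int> \<longrightarrow>
                   emeasure lborel {x. f (x - \<theta>) \<noteq> f (x - \<theta>s)} > 0"
    and indep: "prob_space.indep_vars M (\<lambda>_. borel) Z UNIV"
    and dens: "\<And>i. distributed M lborel (Z i) (\<lambda>x. ennreal (\<phi> x))"
    and phi_nonneg: "\<And>x. \<phi> x \<ge> 0"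
    and phi_even: "\<And>x. \<phi> (- x) = \<phi> x"
    and Phi_def: "\<And>t. \<Phi> t = measure M {\<omega> \<in> space M. Z 1 \<omega> \<le> t}"
  shows "\<forall>\<epsilon>>0.
           (\<forall>n. {\<omega> \<in> space M.
                  (SUP \<theta>. \<bar>Mhat f (\<lambda>i. f (real i / real n - \<theta>s) + Z i \<omega>) n \<theta>
                          - Mpop f \<Phi> \<phi> \<theta>s \<theta>\<bar>) > \<epsilon>} \<in> sets M)
         \<and> ((\<lambda>n. measure M {\<omega> \<in> space M.
                  (SUP \<theta>. \<bar>Mhat f (\<lambda>i. f (real i / real n - \<theta>s) + Z i \<omega>) n \<theta>
                          - Mpop f \<Phi> \<phi> \<theta>s \<theta>\<bar>) > \<epsilon>}) \<longlonglongrightarrow> 0)"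
proof -
  interpret template_model M Z \<phi> \<Phi> f \<theta>s
    by (intro template_model.intro iid_noise.intro iid_noise_axioms.intro template_model_axioms.intro)
      (use P lip per indep dens phi_nonneg Phi_def in auto)
  have "\<bar>Mhat f (\<lambda>i. f (real i / real n - \<theta>s) + Z i \<omega>) n \<theta> - Mpop f \<Phi> \<phi> \<theta>s \<theta>\<bar> = crit_error n \<theta> \<omega>"
    for n \<omega> \<theta>
    using Mhat_eq_crit[of n \<omega> \<theta>] by (simp add: crit_error_def signal_def)
  then show ?thesis
    using sets_SUP_crit_error_gt prob_SUP_crit_error_gt_tendsto by simp
qed

end
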